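(* Let $a>0$ and $0\le r_0<a$, and consider, in polar coordinates $(r,\theta)$ about a pole $O$, the circle of radius $a$ whose centre $C$ has polar coordinates $(r_0,\theta_0)$, so that the ray from $O$ in direction $\theta$ meets the circle at distance $$r(\theta)=r_0\cos(\theta-\theta_0)+\sqrt{a^2-r_0^2\sin^2(\theta-\theta_0)} .$$ Let $\theta_1<\theta_2<\theta_1+\pi$ and set $\theta_3=\theta_1+\pi$, $\theta_4=\theta_2+\pi$, $\theta_5=\theta_1+2\pi$. The two lines through $O$ in the directions $\theta_1,\theta_2$ divide the disc into four sectors with areas $S_i=\frac12\int_{\theta_i}^{\theta_{i+1}} r(\theta)^2\,d\theta$, $1\le i\le 4$. Then $$S_1+S_3=a^2(\theta_2-\theta_1)+r_0^2\sin(\theta_2-\theta_1)\cos(\theta_1+\theta_2-2\theta_0),\qquad S_2+S_4=a^2(\pi-\theta_2+\theta_1)-r_0^2\sin(\theta_2-\theta_1)\cos(\theta_1+\theta_2-2\theta_0),$$ and $S_1+S_3=S_2+S_4$ if and only if $$\frac{r_0^2}{2}\Big[\sin 2(\theta_2-\theta_0)-\sin 2(\theta_1-\theta_0)\Big]+a^2\Big(\theta_2-\theta_1-\frac{\pi}{2}\Big)=0 .$$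
   Context: Polar coordinates are taken about the pole $O$; the point with polar coordinates $(r,\theta)$ is $O+r(\cos\theta,\sin\theta)$. The sector $S_i$ is the region $\{O+\rho(\cos\theta,\sin\theta):\ \theta_i\le\theta\le\theta_{i+1},\ 0\le\rho\le r(\theta)\}$. *)

theory Defs
  imports "HOL-Analysis.Analysis"
begin

definition circ_r :: "real \<Rightarrow> real \<Rightarrow> real \<Rightarrow> real \<Rightarrow> real" where
  "circ_r a r0 th0 th = r0 * cos (th - th0) + sqrt (a^2 - r0^2 * (sin (th - th0))^2)"

definition sector_area :: "real \<Rightarrow> real \<Rightarrow> real \<Rightarrow> real \<Rightarrow> real \<Rightarrow> real" where
  "sector_area a r0 th0 alpha beta = (1/2) * integral {alpha..beta} (\<lambda>th. (circ_r a r0 th0 th)^2)"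

end

theory Submission
  imports Defs
begin

text \<open>The line through the pole in direction \<open>\<theta>\<close> meets the circle at signed distances
  \<open>r0 cos(\<theta> - \<theta>0) \<plusminus> q\<close> with \<open>q = sqrt (a\<^sup>2 - r0\<^sup>2 sin\<^sup>2(\<theta> - \<theta>0))\<close>, and these are \<open>r(\<theta>)\<close> and
  \<open>-r(\<theta> + \<pi>)\<close>. Hence the square root cancels from \<open>r(\<theta>)\<^sup>2 + r(\<theta> + \<pi>)\<^sup>2 = 2a\<^sup>2 + 2r0\<^sup>2 cos 2(\<theta> - \<theta>0)\<close>,
  so the total area of two opposite sectors is an elementary integral. The rest is the
  identity \<open>sin 2\<alpha> - sin 2\<beta> = 2 sin(\<alpha> - \<beta>) cos(\<alpha> + \<beta>)\<close>.\<close>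

lemma circ_r_sq_add_antipodal:
  fixes a r0 th0 x :: real
  assumes "r0\<^sup>2 \<le> a\<^sup>2"
  shows "(circ_r a r0 th0 x)\<^sup>2 + (circ_r a r0 th0 (x + pi))\<^sup>2 = 2 * a\<^sup>2 + 2 * r0\<^sup>2 * cos (2 * (x - th0))"
proof -
  define c where "c = cos (x - th0)"
  define s where "s = sin (x - th0)"
  define q where "q = sqrt (a\<^sup>2 - r0\<^sup>2 * s\<^sup>2)"
  have cs: "c\<^sup>2 + s\<^sup>2 = 1"
    unfolding c_def s_def by simp
  have "s\<^sup>2 \<le> 1"
    unfolding s_def by (simp add: abs_square_le_1)
  then have "r0\<^sup>2 * s\<^sup>2 \<le> r0\<^sup>2"
    by (simp add: mult_left_le)
  with assms have q2: "q\<^sup>2 = a\<^sup>2 - r0\<^sup>2 * s\<^sup>2"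
    unfolding q_def by simp
  have "cos (x + pi - th0) = - c" and "sin (x + pi - th0) = - s"
    unfolding c_def s_def diff_add_eq[symmetric] by simp_all
  then have "(circ_r a r0 th0 x)\<^sup>2 + (circ_r a r0 th0 (x + pi))\<^sup>2 = (r0 * c + q)\<^sup>2 + (- r0 * c + q)\<^sup>2"
    unfolding circ_r_def q_def c_def s_def by simp
  also have "\<dots> = 2 * r0\<^sup>2 * (c\<^sup>2 - s\<^sup>2) + 2 * a\<^sup>2"
    using q2 cs by (simp add: power2_eq_square algebra_simps)
  also have "c\<^sup>2 - s\<^sup>2 = cos (2 * (x - th0))"
    unfolding c_def s_def by (rule cos_double[symmetric])
  finally show ?thesis
    by simp
qed

lemma sector_area_add_antipodal:
  fixes a r0 th0 u v :: real
  assumes "r0\<^sup>2 \<le> a\<^sup>2" and "u \<le> v"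
  shows "sector_area a r0 th0 u v + sector_area a r0 th0 (u + pi) (v + pi)
     = a\<^sup>2 * (v - u) + r0\<^sup>2 / 2 * (sin (2 * (v - th0)) - sin (2 * (u - th0)))"
proof -
  define f where "f = (\<lambda>th. (circ_r a r0 th0 th)\<^sup>2)"
  define F where "F = (\<lambda>x::real. 2 * a\<^sup>2 * x + r0\<^sup>2 * sin (2 * (x - th0)))"
  have integrable: "g integrable_on {u..v}" if "continuous_on UNIV g" for g :: "real \<Rightarrow> real"
    using that by (auto intro: integrable_continuous_interval continuous_on_subset)
  have "continuous_on UNIV f" and "continuous_on UNIV (f \<circ> (+) pi)"
    unfolding f_def circ_r_def o_def by (intro continuous_intros)+
  then have "integral {u..v} f + integral {u..v} (f \<circ> (+) pi) = integral {u..v} (\<lambda>x. f x + f (x + pi))"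
    by (simp add: integral_add[symmetric] integrable add.commute)
  also have "(\<lambda>x. f x + f (x + pi)) = (\<lambda>x. 2 * a\<^sup>2 + 2 * r0\<^sup>2 * cos (2 * (x - th0)))"
    unfolding f_def using circ_r_sq_add_antipodal[OF assms(1)] by auto
  also have "integral {u..v} \<dots> = F v - F u"
    unfolding F_def using assms(2)
    by (intro integral_unique fundamental_theorem_of_calculus)
       (auto intro!: derivative_eq_intros simp flip: has_real_derivative_iff_has_vector_derivative)
  finally have "integral {u..v} f + integral {u..v} (f \<circ> (+) pi) = F v - F u" .
  then show ?thesis
    unfolding sector_area_def f_def[symmetric] F_def integral_shift_Icc_real
    by (simp add: add.commute algebra_simps)
qed

lemma sin_double_diff_sin_double:
  fixes u v c :: real
  shows "sin (2 * (v - c)) - sin (2 * (u - c)) = 2 * sin (v - u) * cos (u + v - 2 * c)"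
proof -
  have "sin (2 * (v - c)) - sin (2 * (u - c))
      = 2 * sin ((2 * (v - c) - 2 * (u - c)) / 2) * cos ((2 * (v - c) + 2 * (u - c)) / 2)"
    by (rule sin_diff_sin)
  also have "(2 * (v - c) - 2 * (u - c)) / 2 = v - u"
    by simp
  also have "(2 * (v - c) + 2 * (u - c)) / 2 = u + v - 2 * c"
    by simp
  finally show ?thesis .
qed

theorem mainTheorem3:
  fixes a r0 th0 th1 th2 :: real
  assumes "a > 0" and "0 \<le> r0" and "r0 < a"
    and "th1 < th2" and "th2 < th1 + pi"
  defines "th3 \<equiv> th1 + pi" and "th4 \<equiv> th2 + pi" and "th5 \<equiv> th1 + 2 * pi"
  defines "S1 \<equiv> sector_area a r0 th0 th1 th2"
    and "S2 \<equiv> sector_area a r0 th0 th2 th3"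
    and "S3 \<equiv> sector_area a r0 th0 th3 th4"
    and "S4 \<equiv> sector_area a r0 th0 th4 th5"
  shows "S1 + S3 = a^2 * (th2 - th1) + r0^2 * sin (th2 - th1) * cos (th1 + th2 - 2 * th0) \<and>
         S2 + S4 = a^2 * (pi - th2 + th1) - r0^2 * sin (th2 - th1) * cos (th1 + th2 - 2 * th0) \<and>
         (S1 + S3 = S2 + S4 \<longleftrightarrow>
         r0^2 / 2 * (sin (2 * (th2 - th0)) - sin (2 * (th1 - th0))) + a^2 * (th2 - th1 - pi / 2) = 0)"
proof -
  let ?E = "r0\<^sup>2 * sin (th2 - th1) * cos (th1 + th2 - 2 * th0)"
  have r0_a: "r0\<^sup>2 \<le> a\<^sup>2"
    using assms(2,3) by (simp add: power_mono)
  have S13: "S1 + S3 = a\<^sup>2 * (th2 - th1) + ?E"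
    using sector_area_add_antipodal[OF r0_a, of th1 th2 th0] assms(4)
    unfolding S1_def S3_def th3_def th4_def sin_double_diff_sin_double by simp
  have "S2 + S4 = a\<^sup>2 * (th1 + pi - th2) + r0\<^sup>2 * sin (th1 + pi - th2) * cos (th2 + (th1 + pi) - 2 * th0)"
    using sector_area_add_antipodal[OF r0_a, of th2 "th1 + pi" th0] assms(5)
    unfolding S2_def S4_def th3_def th4_def th5_def sin_double_diff_sin_double
    by (simp add: add.assoc)
  also have "sin (th1 + pi - th2) = sin (th2 - th1)"
    by (simp add: diff_add_eq[symmetric] sin_diff)
  also have "cos (th2 + (th1 + pi) - 2 * th0) = - cos (th1 + th2 - 2 * th0)"
    by (simp add: algebra_simps flip: add_diff_eq)
  finally have S24: "S2 + S4 = a\<^sup>2 * (pi - th2 + th1) - ?E"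
    by simp
  have balance: "r0\<^sup>2 / 2 * (sin (2 * (th2 - th0)) - sin (2 * (th1 - th0))) + a\<^sup>2 * (th2 - th1 - pi / 2)
      = ((S1 + S3) - (S2 + S4)) / 2"
    unfolding sin_double_diff_sin_double S13 S24 by (simp add: algebra_simps)
  have "S1 + S3 = S2 + S4 \<longleftrightarrow>
      r0\<^sup>2 / 2 * (sin (2 * (th2 - th0)) - sin (2 * (th1 - th0))) + a\<^sup>2 * (th2 - th1 - pi / 2) = 0"
    unfolding balance by simp
  with S13 S24 show ?thesis
    by blast
qed

end
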